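(* Let $G$ be a graph of the form $G=B\cup G_1\cup\cdots\cup G_m$ with $m\ge 2$, where $B,G_1,\dots,G_m$ are subgraphs, the graphs $G_1,\dots,G_m$ are pairwise vertex-disjoint, and each $G_i$ shares exactly one vertex $x_i$ with $B$. Let $p$ be an integer such that $\mathrm{pw}(G_i;x_i)\le p$ for all $i\in\{2,\dots,m\}$. Then for every $x\in V(B)$, $$\mathrm{pw}(G;x)\le \max\{\mathrm{pw}(B;x_1)+p+1,\ \mathrm{pw}(G_1;x_1)\}.$$
   Context: A path-decomposition of $G$ is a sequence $(X_0,\dots,X_s)$ of subsets of $V(G)$ such that for each vertex $v$ the indices $i$ with $v\in X_i$ form a non-empty interval, and each edge has both ends in some $X_i$; its width is $\max_i|X_i|-1$. For $x\in V(G)$, $\mathrm{pw}(G;x)$ denotes the minimum width of a path-decomposition $(X_0,\dots,X_s)$ of $G$ with $x\in X_0$. *)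

theory Defs
  imports Main
begin

type_synonym 'a graph = "'a set \<times> 'a set set"

definition verts :: "'a graph \<Rightarrow> 'a set" where "verts G = fst G"
definition edges :: "'a graph \<Rightarrow> 'a set set" where "edges G = snd G"

definition is_graph :: "'a graph \<Rightarrow> bool" where
  "is_graph G \<longleftrightarrow> finite (verts G) \<and>
     (\<forall>e\<in>edges G. e \<subseteq> verts G \<and> card e = 2)"

definition is_path_decomp :: "'a graph \<Rightarrow> 'a set list \<Rightarrow> bool" where
  "is_path_decomp G Xs \<longleftrightarrow> Xs \<noteq> [] \<and>
     (\<forall>i<length Xs. Xs ! i \<subseteq> verts G) \<and>
     (\<forall>v\<in>verts G. (\<exists>i<length Xs. v \<in> Xs ! i) \<and>
        (\<forall>i j k. i \<le> j \<and> j \<le> k \<and> k < length Xs \<and> v \<in> Xs ! i \<and> v \<in> Xs ! k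
                 \<longrightarrow> v \<in> Xs ! j)) \<and>
     (\<forall>e\<in>edges G. \<exists>i<length Xs. e \<subseteq> Xs ! i)"

definition pd_width :: "'a set list \<Rightarrow> int" where
  "pd_width Xs = int (Max (card ` set Xs)) - 1"

definition pw_rooted :: "'a graph \<Rightarrow> 'a \<Rightarrow> int" where
  "pw_rooted G x = (LEAST w. \<exists>Xs. is_path_decomp G Xs \<and> x \<in> hd Xs \<and> pd_width Xs = w)"

definition graph_union :: "'a graph \<Rightarrow> 'a graph \<Rightarrow> 'a graph" where
  "graph_union G H = (verts G \<union> verts H, edges G \<union> edges H)"

definition graph_Union :: "'a graph set \<Rightarrow> 'a graph" where
  "graph_Union S = (\<Union>H\<in>S. verts H, \<Union>H\<in>S. edges H)"

end

theory Submission
  imports Defs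
begin

text \<open>
  Reverse an optimal decomposition of \<open>B\<close> rooted at \<open>x\<^sub>1\<close>, so that \<open>x\<^sub>1\<close> lies in the last bag.
  For each \<open>i \<ge> 2\<close>, splice a reversed optimal decomposition of \<open>G\<^sub>i\<close> rooted at \<open>x\<^sub>i\<close> in front of the
  first bag \<open>X\<close> containing \<open>x\<^sub>i\<close>, adding to each of its bags the set \<open>S\<close> of vertices that \<open>X\<close> shares
  with the preceding bag. Gluing never enlarges a bag in which a vertex of \<open>B\<close> first appears, so \<open>X\<close>
  still has at most \<open>pw(B;x\<^sub>1) + 1\<close> elements, and since \<open>x\<^sub>i \<in> X - S\<close> the spliced bags have at most
  \<open>pw(B;x\<^sub>1) + p + 1\<close> elements. Adding \<open>x\<close> to every bag and appending an optimal decomposition of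
  \<open>G\<^sub>1\<close> rooted at \<open>x\<^sub>1\<close> yields the bound.
\<close>

lemma Union_set_map_Un: "Zs \<noteq> [] \<Longrightarrow> \<Union>(set (map ((\<union>) S) Zs)) = S \<union> \<Union>(set Zs)"
  by (induction Zs) auto

definition interval_bags :: "'a set list \<Rightarrow> bool" where
  "interval_bags Xs \<longleftrightarrow> (\<forall>v i j k. i \<le> j \<and> j \<le> k \<and> k < length Xs \<and> v \<in> Xs ! i \<and> v \<in> Xs ! k
     \<longrightarrow> v \<in> Xs ! j)"

lemma interval_bagsD:
  "interval_bags Xs \<Longrightarrow> i \<le> j \<Longrightarrow> j \<le> k \<Longrightarrow> k < length Xs \<Longrightarrow> v \<in> Xs ! i \<Longrightarrow> v \<in> Xs ! k
   \<Longrightarrow> v \<in> Xs ! j"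
  unfolding interval_bags_def by blast

lemma interval_bags_Nil [simp]: "interval_bags []"
  by (simp add: interval_bags_def)

lemma interval_bags_ConsI:
  assumes hd: "X \<inter> \<Union>(set Xs) \<subseteq> hd Xs" and int: "interval_bags Xs"
  shows "interval_bags (X # Xs)"
  unfolding interval_bags_def
proof (intro allI impI)
  fix v i j k
  assume ijk: "i \<le> j \<and> j \<le> k \<and> k < length (X # Xs) \<and> v \<in> (X # Xs) ! i \<and> v \<in> (X # Xs) ! k"
  consider "j = 0" | "0 < i" | "i = 0" "0 < j"
    by linarith
  then show "v \<in> (X # Xs) ! j"
  proof cases
    case 1
    then show ?thesis
      using ijk by auto
  next
    case 2
    then have "v \<in> Xs ! (j - 1)"
      using interval_bagsD[OF int, of "i - 1" "j - 1" "k - 1" v] ijk by auto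
    then show ?thesis
      using 2 ijk by (cases j) auto
  next
    case 3
    then have k: "v \<in> Xs ! (k - 1)" "k - 1 < length Xs"
      using ijk by auto
    then have "v \<in> hd Xs"
      using ijk 3 hd nth_mem by fastforce
    then have "v \<in> Xs ! 0"
      using k(2) by (cases Xs) auto
    then have "v \<in> Xs ! (j - 1)"
      using interval_bagsD[OF int, of 0 "j - 1" "k - 1" v] k ijk by auto
    then show ?thesis
      using 3 by (cases j) auto
  qed
qed

lemma interval_bags_Cons:
  "interval_bags (X # Xs) \<longleftrightarrow> X \<inter> \<Union>(set Xs) \<subseteq> hd Xs \<and> interval_bags Xs"
proof
  assume int: "interval_bags (X # Xs)"
  have "v \<in> hd Xs" if "v \<in> X" "v \<in> Xs ! k" "k < length Xs" for v k
  proof -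
    have "v \<in> (X # Xs) ! 1"
      by (rule interval_bagsD[OF int, of 0 _ "Suc k"]) (use that in auto)
    then show ?thesis
      using that by (cases Xs) auto
  qed
  then have "X \<inter> \<Union>(set Xs) \<subseteq> hd Xs"
    by (auto simp: in_set_conv_nth)
  moreover have "interval_bags Xs"
    unfolding interval_bags_def
    using interval_bagsD[OF int, of "Suc _" "Suc _" "Suc _"] by auto
  ultimately show "X \<inter> \<Union>(set Xs) \<subseteq> hd Xs \<and> interval_bags Xs" ..
qed (use interval_bags_ConsI in blast)

lemma interval_bags_append:
  assumes "Xs \<noteq> []" "Ys \<noteq> []"
  shows "interval_bags (Xs @ Ys) \<longleftrightarrow>
    interval_bags Xs \<and> interval_bags Ys \<and> \<Union>(set Xs) \<inter> \<Union>(set Ys) \<subseteq> last Xs \<inter> hd Ys"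
  using assms(1)
proof (induction Xs rule: list_nonempty_induct)
  case (single X)
  then show ?case
    using assms(2) by (auto simp: interval_bags_Cons)
next
  case (cons X Xs)
  let ?U = "\<lambda>Zs. \<Union>(set Zs)"
  have "hd Xs \<subseteq> ?U Xs" "last Xs \<subseteq> ?U Xs"
    using cons.hyps by (simp_all add: Union_upper)
  moreover have "interval_bags ((X # Xs) @ Ys) \<longleftrightarrow>
      X \<inter> (?U Xs \<union> ?U Ys) \<subseteq> hd Xs \<and> interval_bags (Xs @ Ys)"
    using cons.hyps by (simp add: interval_bags_Cons)
  moreover have "interval_bags (X # Xs) \<longleftrightarrow> X \<inter> ?U Xs \<subseteq> hd Xs \<and> interval_bags Xs"
    by (rule interval_bags_Cons)
  moreover have "?U (X # Xs) = X \<union> ?U Xs" "last (X # Xs) = last Xs"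
    using cons.hyps by auto
  ultimately show ?case
    unfolding cons.IH by blast
qed

lemma interval_bags_rev [simp]: "interval_bags (rev Xs) \<longleftrightarrow> interval_bags Xs"
proof (induction Xs)
  case (Cons X Xs)
  then show ?case
    by (cases "Xs = []") (auto simp: interval_bags_append interval_bags_Cons last_rev)
qed simp

lemma interval_bags_map_Un:
  "interval_bags Xs \<Longrightarrow> interval_bags (map ((\<union>) S) Xs)"
proof (induction Xs)
  case (Cons X Xs)
  then show ?case
    by (cases Xs) (auto simp: interval_bags_Cons)
qed simp

lemma interval_bags_glue:
  assumes AC: "interval_bags (A @ C)" "C \<noteq> []" and Zs: "interval_bags Zs" "Zs \<noteq> []"
    and meet: "\<Union>(set Zs) \<inter> \<Union>(set (A @ C)) \<subseteq> hd Zs \<inter> hd C"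
    and S: "S \<subseteq> hd C" "A \<noteq> [] \<Longrightarrow> last A \<inter> hd C \<subseteq> S"
  shows "interval_bags (A @ map ((\<union>) S) (rev Zs) @ C)"
proof -
  let ?U = "\<lambda>Xs. \<Union>(set Xs)"
  define M where "M = map ((\<union>) S) (rev Zs)"
  have M: "M \<noteq> []" "interval_bags M" "?U M = S \<union> ?U Zs" "last M = S \<union> hd Zs" "hd M = S \<union> last Zs"
    using Zs Union_set_map_Un[of "rev Zs" S]
    by (simp_all add: M_def interval_bags_map_Un last_map hd_map last_rev hd_rev)
  have C: "interval_bags C" "hd C \<subseteq> ?U C"
    using AC by (cases "A = []"; simp add: interval_bags_append Union_upper)+
  have "?U M \<inter> ?U C \<subseteq> last M \<inter> hd C"
    using meet S(1) unfolding M(3,4) by auto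
  then have MC: "interval_bags (M @ C)"
    using M(1,2) C(1) AC(2) by (simp add: interval_bags_append)
  show ?thesis
  proof (cases "A = []")
    case False
    have A: "interval_bags A" "?U A \<inter> ?U C \<subseteq> last A \<inter> hd C"
      using AC False by (simp_all add: interval_bags_append)
    then have "?U A \<inter> ?U (M @ C) \<subseteq> last A \<inter> hd (M @ C)"
      using meet S C(2) False unfolding set_append Union_Un_distrib M(3) hd_append2[OF M(1)] M(5)
      by blast
    then show ?thesis
      using False A(1) MC M(1) by (simp add: interval_bags_append M_def)
  qed (use MC in \<open>simp add: M_def\<close>)
qed

lemma verts_graph_union [simp]: "verts (graph_union G H) = verts G \<union> verts H"
  and edges_graph_union [simp]: "edges (graph_union G H) = edges G \<union> edges H"
  by (simp_all add: graph_union_def verts_def edges_def)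

lemma verts_graph_Union [simp]: "verts (graph_Union S) = (\<Union>H\<in>S. verts H)"
  and edges_graph_Union [simp]: "edges (graph_Union S) = (\<Union>H\<in>S. edges H)"
  by (simp_all add: graph_Union_def verts_def edges_def)

lemma graph_eqI: "verts G = verts H \<Longrightarrow> edges G = edges H \<Longrightarrow> G = H"
  by (simp add: verts_def edges_def prod_eq_iff)

lemma is_path_decomp_iff:
  "is_path_decomp G Xs \<longleftrightarrow> Xs \<noteq> [] \<and> \<Union>(set Xs) = verts G \<and> interval_bags Xs \<and>
     (\<forall>e\<in>edges G. \<exists>X\<in>set Xs. e \<subseteq> X)"
proof -
  have bags: "(\<forall>i<length Xs. Xs ! i \<subseteq> verts G) \<longleftrightarrow> \<Union>(set Xs) \<subseteq> verts G"
    by (simp add: Sup_le_iff all_set_conv_all_nth)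
  have ex_nth: "(\<exists>i<length Xs. P (Xs ! i)) \<longleftrightarrow> (\<exists>X\<in>set Xs. P X)" for P
    by (auto simp: set_conv_nth)
  have cover: "(\<forall>v\<in>verts G. \<exists>i<length Xs. v \<in> Xs ! i) \<longleftrightarrow> verts G \<subseteq> \<Union>(set Xs)"
    unfolding ex_nth by blast
  have interval: "(\<forall>v\<in>verts G. \<forall>i j k. i \<le> j \<and> j \<le> k \<and> k < length Xs \<and> v \<in> Xs ! i \<and> v \<in> Xs ! k
      \<longrightarrow> v \<in> Xs ! j) \<longleftrightarrow> interval_bags Xs"
    if "\<Union>(set Xs) \<subseteq> verts G"
  proof -
    have "v \<in> verts G" if "i < length Xs" "v \<in> Xs ! i" for v i
      using that nth_mem \<open>\<Union>(set Xs) \<subseteq> verts G\<close> by blast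
    then show ?thesis
      unfolding interval_bags_def by (meson le_less_trans)
  qed
  show ?thesis
  proof (cases "\<Union>(set Xs) \<subseteq> verts G")
    case True
    then show ?thesis
      unfolding is_path_decomp_def ex_nth ball_conj_distrib bags cover interval[OF True]
      by auto
  next
    case False
    then show ?thesis
      unfolding is_path_decomp_def bags by auto
  qed
qed

lemma is_path_decomp_single: "is_graph G \<Longrightarrow> is_path_decomp G [verts G]"
  unfolding is_path_decomp_iff is_graph_def by (simp add: interval_bags_Cons)

lemma is_path_decomp_rev [simp]: "is_path_decomp G (rev Xs) \<longleftrightarrow> is_path_decomp G Xs"
  by (simp add: is_path_decomp_iff)

lemma is_path_decomp_map_Un:
  assumes "is_path_decomp G Xs" "S \<subseteq> verts G"
  shows "is_path_decomp G (map ((\<union>) S) Xs)"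
proof -
  have Xs: "Xs \<noteq> []" "\<Union>(set Xs) = verts G" "interval_bags Xs"
    "\<forall>e\<in>edges G. \<exists>X\<in>set Xs. e \<subseteq> X"
    using assms(1) by (simp_all add: is_path_decomp_iff)
  have "\<forall>e\<in>edges G. \<exists>X\<in>set (map ((\<union>) S) Xs). e \<subseteq> X"
  proof
    fix e assume "e \<in> edges G"
    then obtain X where "X \<in> set Xs" "e \<subseteq> X"
      using Xs(4) by blast
    then show "\<exists>X\<in>set (map ((\<union>) S) Xs). e \<subseteq> X"
      by auto
  qed
  moreover have "\<Union>(set (map ((\<union>) S) Xs)) = verts G"
    using Xs(1,2) assms(2) Union_set_map_Un[of Xs S] by auto
  ultimately show ?thesis
    using Xs(1,3) by (simp add: is_path_decomp_iff interval_bags_map_Un)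
qed

lemma is_path_decomp_append:
  assumes "is_path_decomp G L" "is_path_decomp H W" "verts G \<inter> verts H \<subseteq> last L \<inter> hd W"
  shows "is_path_decomp (graph_union G H) (L @ W)"
proof -
  have L: "L \<noteq> []" "\<Union>(set L) = verts G" "interval_bags L" "\<forall>e\<in>edges G. \<exists>X\<in>set L. e \<subseteq> X"
    using assms(1) by (simp_all add: is_path_decomp_iff)
  have W: "W \<noteq> []" "\<Union>(set W) = verts H" "interval_bags W" "\<forall>e\<in>edges H. \<exists>X\<in>set W. e \<subseteq> X"
    using assms(2) by (simp_all add: is_path_decomp_iff)
  have "\<forall>e\<in>edges G \<union> edges H. \<exists>X\<in>set L \<union> set W. e \<subseteq> X"
    using L(4) W(4) by blast
  then show ?thesis
    using L W assms(3) by (simp add: is_path_decomp_iff interval_bags_append)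
qed

lemma is_path_decomp_glue:
  assumes dec: "is_path_decomp G (A @ C)" "C \<noteq> []" "v \<in> hd C"
    and dec': "is_path_decomp H Zs" "v \<in> hd Zs"
    and meet: "verts G \<inter> verts H = {v}"
    and S: "S \<subseteq> hd C" "A \<noteq> [] \<Longrightarrow> last A \<inter> hd C \<subseteq> S"
  shows "is_path_decomp (graph_union G H) (A @ map ((\<union>) S) (rev Zs) @ C)"
proof -
  let ?U = "\<lambda>Xs. \<Union>(set Xs)"
  let ?M = "map ((\<union>) S) (rev Zs)"
  have Zs: "Zs \<noteq> []" "interval_bags Zs" "?U Zs = verts H" "\<forall>e\<in>edges H. \<exists>X\<in>set Zs. e \<subseteq> X"
    using dec'(1) by (simp_all add: is_path_decomp_iff)
  have AC: "interval_bags (A @ C)" "?U (A @ C) = verts G" "\<forall>e\<in>edges G. \<exists>X\<in>set (A @ C). e \<subseteq> X"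
    using dec(1) by (simp_all add: is_path_decomp_iff)
  have "?U Zs \<inter> ?U (A @ C) \<subseteq> hd Zs \<inter> hd C"
    using meet dec(3) dec'(2) unfolding Zs(3) AC(2) by auto
  then have interval: "interval_bags (A @ ?M @ C)"
    using interval_bags_glue AC(1) dec(2) Zs(1,2) S by blast
  have "?U ?M = S \<union> verts H"
    using Union_set_map_Un[of "rev Zs" S] Zs(1,3) by simp
  moreover have "hd C \<subseteq> ?U C"
    using dec(2) by (simp add: Union_upper)
  ultimately have cover: "?U (A @ ?M @ C) = verts G \<union> verts H"
    using S(1) unfolding AC(2)[symmetric] set_append Union_Un_distrib by blast
  have edges: "\<exists>X\<in>set (A @ ?M @ C). e \<subseteq> X" if "e \<in> edges G \<union> edges H" for e
  proof -
    from that consider "e \<in> edges G" | "e \<in> edges H"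
      by blast
    then show ?thesis
    proof cases
      case 1
      then obtain X where "X \<in> set (A @ C)" "e \<subseteq> X"
        using AC(3) by blast
      then show ?thesis
        by auto
    next
      case 2
      then obtain X where "X \<in> set Zs" "e \<subseteq> X"
        using Zs(4) by blast
      moreover from this have "S \<union> X \<in> set (A @ ?M @ C)"
        by simp
      ultimately show ?thesis
        by blast
    qed
  qed
  show ?thesis
    using dec(2) interval cover edges unfolding is_path_decomp_iff edges_graph_union verts_graph_union
    by blast
qed

lemma pd_width_le_iff:
  assumes "Xs \<noteq> []"
  shows "pd_width Xs \<le> w \<longleftrightarrow> (\<forall>X\<in>set Xs. int (card X) \<le> w + 1)"
proof -
  have "Max (card ` set Xs) \<in> card ` set Xs"
    using assms by (intro Max_in) auto
  then obtain X0 where X0: "X0 \<in> set Xs" "pd_width Xs = int (card X0) - 1"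
    by (auto simp: pd_width_def)
  have "card X \<le> card X0" if "X \<in> set Xs" for X
    using that X0 Max_ge[of "card ` set Xs" "card X"] by (simp add: pd_width_def)
  then show ?thesis
    using X0 by (smt (verit) of_nat_mono)
qed

lemma card_le_pd_width: "X \<in> set Xs \<Longrightarrow> int (card X) \<le> pd_width Xs + 1"
  by (auto simp: pd_width_def)

lemma pd_width_nonneg:
  assumes "is_path_decomp G Xs" "finite (verts G)" "x \<in> hd Xs"
  shows "0 \<le> pd_width Xs"
proof -
  have "hd Xs \<in> set Xs"
    using assms(1) by (simp add: is_path_decomp_iff)
  moreover from this have "finite (hd Xs)"
    using assms(1,2) Union_upper[of "hd Xs" "set Xs"] finite_subset
    by (simp add: is_path_decomp_iff)
  then have "0 < card (hd Xs)"
    using assms(3) card_gt_0_iff by blast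
  ultimately show ?thesis
    using card_le_pd_width[of "hd Xs" Xs] by linarith
qed

lemma pw_rooted_minimal:
  assumes "is_path_decomp G Xs" "x \<in> hd Xs"
  shows "\<exists>Ys. is_path_decomp G Ys \<and> x \<in> hd Ys \<and> pd_width Ys = pw_rooted G x"
    and "pw_rooted G x \<le> pd_width Xs"
proof -
  let ?dec = "\<lambda>Ys. is_path_decomp G Ys \<and> x \<in> hd Ys"
  have width_ge: "-1 \<le> pd_width Ys" for Ys :: "'a set list"
    by (simp add: pd_width_def)
  obtain Ys where Ys: "?dec Ys" and min: "\<And>Zs. ?dec Zs \<Longrightarrow> nat (pd_width Ys + 1) \<le> nat (pd_width Zs + 1)"
    using ex_has_least_nat[of ?dec Xs "\<lambda>Zs. nat (pd_width Zs + 1)"] assms by blast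
  have "pw_rooted G x = pd_width Ys"
    unfolding pw_rooted_def
  proof (rule Least_equality)
    fix w
    assume "\<exists>Zs. is_path_decomp G Zs \<and> x \<in> hd Zs \<and> pd_width Zs = w"
    then obtain Zs where "?dec Zs" "pd_width Zs = w"
      by blast
    then show "pd_width Ys \<le> w"
      using min[of Zs] width_ge[of Ys] width_ge[of Zs] by linarith
  qed (use Ys in blast)
  then show "\<exists>Ys. is_path_decomp G Ys \<and> x \<in> hd Ys \<and> pd_width Ys = pw_rooted G x"
    and "pw_rooted G x \<le> pd_width Xs"
    using Ys min[of Xs] width_ge[of Xs] width_ge[of Ys] assms by auto
qed

lemma pw_rooted_attained:
  assumes "is_graph G" "x \<in> verts G"
  shows "\<exists>Ys. is_path_decomp G Ys \<and> x \<in> hd Ys \<and> pd_width Ys = pw_rooted G x"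
  using pw_rooted_minimal(1)[OF is_path_decomp_single[OF assms(1)]] assms(2) by simp

text \<open>
  The invariant of the gluing: a block is always spliced in front of the bag where its root first
  appears, so that bag has at most \<open>K\<close> elements and the block copies fewer than \<open>K\<close> of them.
\<close>

fun fresh_bags_bounded :: "'a set \<Rightarrow> nat \<Rightarrow> 'a set \<Rightarrow> 'a set list \<Rightarrow> bool" where
  "fresh_bags_bounded U K P [] \<longleftrightarrow> True"
| "fresh_bags_bounded U K P (X # Xs) \<longleftrightarrow>
     ((X - P) \<inter> U \<noteq> {} \<longrightarrow> card X \<le> K) \<and> fresh_bags_bounded U K X Xs"

lemma fresh_bags_bounded_append:
  "fresh_bags_bounded U K P (Xs @ Ys) \<longleftrightarrow>
     fresh_bags_bounded U K P Xs \<and> fresh_bags_bounded U K (if Xs = [] then P else last Xs) Ys"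
  by (induction Xs arbitrary: P) auto

lemma fresh_bags_boundedI: "\<forall>X\<in>set Xs. card X \<le> K \<Longrightarrow> fresh_bags_bounded U K P Xs"
  by (induction Xs arbitrary: P) auto

lemma fresh_bags_bounded_mono:
  "fresh_bags_bounded U K P Xs \<Longrightarrow> U' \<subseteq> U \<Longrightarrow> fresh_bags_bounded U' K P Xs"
  by (induction Xs arbitrary: P) auto

lemma fresh_bags_bounded_map_Un:
  "(S - P) \<inter> U = {} \<Longrightarrow> \<forall>Z\<in>set Zs. Z \<inter> U = {} \<Longrightarrow> fresh_bags_bounded U K P (map ((\<union>) S) Zs)"
  by (induction Zs arbitrary: P) auto

lemma fresh_bags_bounded_glue:
  assumes fresh: "fresh_bags_bounded U K {} (A @ X # Cs)"
    and Zs: "Zs \<noteq> []" "\<forall>Z\<in>set Zs. Z \<inter> U' = {}" and "U' \<subseteq> U"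
  shows "fresh_bags_bounded U' K {}
    (A @ map ((\<union>) ((if A = [] then {} else last A) \<inter> X)) (rev Zs) @ X # Cs)"
proof -
  define P where "P = (if A = [] then {} else last A)"
  define M where "M = map ((\<union>) (P \<inter> X)) (rev Zs)"
  have A: "fresh_bags_bounded U K {} A" and X: "(X - P) \<inter> U \<noteq> {} \<longrightarrow> card X \<le> K"
    and Cs: "fresh_bags_bounded U K X Cs"
    using fresh by (simp_all add: fresh_bags_bounded_append P_def)
  have "fresh_bags_bounded U' K P M"
    unfolding M_def using Zs(2) by (intro fresh_bags_bounded_map_Un) auto
  moreover have "X - last M \<subseteq> X - P"
    using Zs(1) by (auto simp: M_def last_map last_rev)
  then have "fresh_bags_bounded U' K (last M) (X # Cs)"
    using X fresh_bags_bounded_mono[OF Cs] \<open>U' \<subseteq> U\<close> by auto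
  moreover have "M \<noteq> []"
    using Zs(1) by (simp add: M_def)
  ultimately show ?thesis
    using fresh_bags_bounded_mono[OF A \<open>U' \<subseteq> U\<close>]
    by (simp add: fresh_bags_bounded_append P_def M_def)
qed

lemma glue_pendant_decomp:
  assumes dec: "is_path_decomp G L" "finite (verts G)" "fresh_bags_bounded U (Suc k) {} L"
    and dec': "is_path_decomp H Zs" "v \<in> hd Zs" "\<forall>Z\<in>set Zs. card Z \<le> q"
    and meet: "verts G \<inter> verts H = {v}" "v \<in> U" "verts H \<inter> U \<subseteq> {v}"
  shows "\<exists>L'. is_path_decomp (graph_union G H) L' \<and> last L' = last L \<and>
    (\<forall>X\<in>set L'. X \<in> set L \<or> card X \<le> k + q) \<and> fresh_bags_bounded (U - {v}) (Suc k) {} L'"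
proof -
  have "\<exists>X\<in>set L. v \<in> X"
    using dec(1) meet(1) by (auto simp: is_path_decomp_iff)
  then obtain A X Cs where L: "L = A @ X # Cs" "v \<in> X" "\<forall>Y\<in>set A. v \<notin> Y"
    using split_list_first_prop by metis
  define S where "S = (if A = [] then {} else last A) \<inter> X"
  define L' where "L' = A @ map ((\<union>) S) (rev Zs) @ X # Cs"
  have "v \<notin> S" "S \<subseteq> X"
    using L(3) by (auto simp: S_def)
  have "(X - (if A = [] then {} else last A)) \<inter> U \<noteq> {}"
    using L meet(2) by auto
  then have "card X \<le> Suc k"
    using dec(3) by (simp add: L(1) fresh_bags_bounded_append)
  moreover have "finite X"
    using dec(1,2) by (auto simp: is_path_decomp_iff L(1) intro: finite_subset)
  moreover have "S \<subseteq> X - {v}"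
    using \<open>v \<notin> S\<close> \<open>S \<subseteq> X\<close> by blast
  ultimately have "card S \<le> k"
    using L(2) card_mono[of "X - {v}" S] by simp
  then have "card (S \<union> Z) \<le> k + q" if "Z \<in> set Zs" for Z
    using that card_Un_le[of S Z] dec'(3) by fastforce
  moreover have "is_path_decomp (graph_union G H) L'"
    unfolding L'_def
    by (rule is_path_decomp_glue) (use dec(1) L(1,2) dec'(1,2) meet(1) in \<open>auto simp: S_def\<close>)
  moreover have "fresh_bags_bounded (U - {v}) (Suc k) {} L'"
    unfolding L'_def S_def
    by (rule fresh_bags_bounded_glue) (use dec(3) L(1) dec'(1) meet(3) in \<open>auto simp: is_path_decomp_iff\<close>)
  ultimately show ?thesis
    by (intro exI[of _ L']) (auto simp: L'_def L(1))
qed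

lemma glue_pendant_decomps:
  fixes G :: "'a graph" and Hs :: "'i \<Rightarrow> 'a graph"
  assumes "finite I" and dec: "is_path_decomp G L" "finite (verts G)" "\<forall>X\<in>set L. card X \<le> Suc k"
    and dec': "\<And>i. i \<in> I \<Longrightarrow> is_path_decomp (Hs i) (Zs i)" "\<And>i. i \<in> I \<Longrightarrow> r i \<in> hd (Zs i)"
      "\<And>i Z. i \<in> I \<Longrightarrow> Z \<in> set (Zs i) \<Longrightarrow> card Z \<le> q"
    and fin: "\<And>i. i \<in> I \<Longrightarrow> finite (verts (Hs i))"
    and meet: "\<And>i. i \<in> I \<Longrightarrow> verts (Hs i) \<inter> verts G = {r i}"
    and disj: "\<And>i j. i \<in> I \<Longrightarrow> j \<in> I \<Longrightarrow> i \<noteq> j \<Longrightarrow> verts (Hs i) \<inter> verts (Hs j) = {}"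
  shows "\<exists>L'. is_path_decomp (graph_union G (graph_Union (Hs ` I))) L' \<and> last L' = last L \<and>
    (\<forall>X\<in>set L'. X \<in> set L \<or> card X \<le> k + q)"
proof -
  have "\<exists>L'. is_path_decomp (graph_union G (graph_Union (Hs ` J))) L' \<and> last L' = last L \<and>
    (\<forall>X\<in>set L'. X \<in> set L \<or> card X \<le> k + q) \<and> fresh_bags_bounded (verts G - r ` J) (Suc k) {} L'"
    if "finite J" "J \<subseteq> I" for J
    using that
  proof (induction J rule: finite_induct)
    case empty
    have "graph_union G (graph_Union (Hs ` {})) = G"
      by (rule graph_eqI) simp_all
    then show ?case
      using dec by (auto intro: fresh_bags_boundedI)
  next
    case (insert i J)
    let ?GJ = "graph_union G (graph_Union (Hs ` J))"
    obtain L' where L': "is_path_decomp ?GJ L'" "last L' = last L"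
      "\<forall>X\<in>set L'. X \<in> set L \<or> card X \<le> k + q" "fresh_bags_bounded (verts G - r ` J) (Suc k) {} L'"
      using insert by auto
    have i: "i \<in> I" and J: "J \<subseteq> I" "i \<notin> J"
      using insert by auto
    have "finite (verts ?GJ)"
      using dec(2) fin insert(1) J by auto
    moreover have "\<forall>Z\<in>set (Zs i). card Z \<le> q"
      using dec'(3)[OF i] by blast
    moreover have "verts ?GJ \<inter> verts (Hs i) = {r i}"
      using meet[OF i] disj[OF i] J by auto
    moreover have "r i \<in> verts G - r ` J"
      using meet disj[OF i] J i by blast
    moreover have "verts (Hs i) \<inter> (verts G - r ` J) \<subseteq> {r i}"
      using meet[OF i] by blast
    ultimately obtain L'' where L'': "is_path_decomp (graph_union ?GJ (Hs i)) L''" "last L'' = last L'"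
      "\<forall>X\<in>set L''. X \<in> set L' \<or> card X \<le> k + q"
      "fresh_bags_bounded (verts G - r ` J - {r i}) (Suc k) {} L''"
      using glue_pendant_decomp[OF L'(1) _ L'(4) dec'(1,2)[OF i]] by blast
    have "graph_union ?GJ (Hs i) = graph_union G (graph_Union (Hs ` insert i J))"
      by (rule graph_eqI) auto
    moreover have "verts G - r ` J - {r i} = verts G - r ` insert i J"
      by auto
    ultimately show ?case
      using L' L'' by (metis (no_types, lifting))
  qed
  then show ?thesis
    using assms(1) by blast
qed

lemma rooted_path_decomp_pendants:
  fixes B :: "'a graph" and Hs :: "'i \<Rightarrow> 'a graph"
  assumes "finite I" "i0 \<notin> I" "finite (verts B)" "x \<in> verts B"
    and Y: "is_path_decomp B Y" "r i0 \<in> hd Y"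
    and W: "is_path_decomp (Hs i0) W" "r i0 \<in> hd W"
    and Zs: "\<And>i. i \<in> I \<Longrightarrow> is_path_decomp (Hs i) (Zs i)" "\<And>i. i \<in> I \<Longrightarrow> r i \<in> hd (Zs i)"
      "\<And>i. i \<in> I \<Longrightarrow> pd_width (Zs i) \<le> p" "0 \<le> p"
    and fin: "\<And>i. i \<in> I \<Longrightarrow> finite (verts (Hs i))"
    and meet: "\<And>i. i \<in> insert i0 I \<Longrightarrow> verts (Hs i) \<inter> verts B = {r i}"
    and disj: "\<And>i j. i \<in> insert i0 I \<Longrightarrow> j \<in> insert i0 I \<Longrightarrow> i \<noteq> j \<Longrightarrow>
      verts (Hs i) \<inter> verts (Hs j) = {}"
  shows "\<exists>F. is_path_decomp (graph_union B (graph_Union (Hs ` insert i0 I))) F \<and> x \<in> hd F \<and>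
    pd_width F \<le> max (pd_width Y + p + 1) (pd_width W)"
proof -
  define w where "w = pd_width Y"
  let ?BI = "graph_union B (graph_Union (Hs ` I))"
  have "0 \<le> w"
    unfolding w_def by (rule pd_width_nonneg[OF Y(1) assms(3) Y(2)])
  have "\<forall>X\<in>set (rev Y). card X \<le> Suc (nat w)"
  proof
    fix X
    assume "X \<in> set (rev Y)"
    then have "int (card X) \<le> w + 1"
      using card_le_pd_width[of X Y] by (simp add: w_def)
    then show "card X \<le> Suc (nat w)"
      using \<open>0 \<le> w\<close> by linarith
  qed
  moreover have "card Z \<le> nat (p + 1)" if "i \<in> I" "Z \<in> set (Zs i)" for i Z
    using card_le_pd_width[OF that(2)] Zs(3)[OF that(1)] by linarith
  ultimately obtain L where L: "is_path_decomp ?BI L" "last L = hd Y"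
    "\<forall>X\<in>set L. X \<in> set Y \<or> card X \<le> nat w + nat (p + 1)"
    using glue_pendant_decomps[of I B "rev Y" "nat w" Hs Zs r "nat (p + 1)"] assms(1,3) Y(1) Zs(1,2)
      fin meet disj by (auto simp: last_rev)
  define F where "F = map ((\<union>) {x}) L @ W"
  have "verts ?BI \<inter> verts (Hs i0) = {r i0}"
    using meet[of i0] disj[of i0] assms(2) by fastforce
  moreover have "L \<noteq> []"
    using L(1) by (simp add: is_path_decomp_iff)
  ultimately have "verts ?BI \<inter> verts (Hs i0) \<subseteq> last (map ((\<union>) {x}) L) \<inter> hd W"
    using L(2) Y(2) W(2) by (simp add: last_map)
  then have "is_path_decomp (graph_union ?BI (Hs i0)) F"
    unfolding F_def using L(1) W(1) assms(4) by (intro is_path_decomp_append is_path_decomp_map_Un) auto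
  moreover have "graph_union ?BI (Hs i0) = graph_union B (graph_Union (Hs ` insert i0 I))"
    by (rule graph_eqI) auto
  moreover have "pd_width F \<le> max (w + p + 1) (pd_width W)"
  proof -
    have "int (card ({x} \<union> X)) \<le> w + p + 2" if "X \<in> set L" for X
    proof -
      have "int (card X) \<le> w + p + 1"
        using L(3) that card_le_pd_width[of X Y] \<open>0 \<le> w\<close> Zs(4) by (fastforce simp: w_def)
      then show ?thesis
        using card_Un_le[of "{x}" X] by simp
    qed
    moreover have "int (card X) \<le> pd_width W + 1" if "X \<in> set W" for X
      using card_le_pd_width[OF that] .
    ultimately show ?thesis
      using \<open>L \<noteq> []\<close> by (force simp: F_def pd_width_le_iff)
  qed
  moreover have "x \<in> hd F"
    using \<open>L \<noteq> []\<close> by (simp add: F_def hd_map)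
  ultimately show ?thesis
    unfolding w_def by metis
qed

theorem lemma3p3:
  fixes G B :: "'a graph" and Gs :: "nat \<Rightarrow> 'a graph" and xs :: "nat \<Rightarrow> 'a"
    and m :: nat and p :: int and x :: 'a
  assumes "m \<ge> 2"
    and "is_graph B"
    and "\<And>i. i \<in> {1..m} \<Longrightarrow> is_graph (Gs i)"
    and "G = graph_union B (graph_Union (Gs ` {1..m}))"
    and "\<And>i j. i \<in> {1..m} \<Longrightarrow> j \<in> {1..m} \<Longrightarrow> i \<noteq> j \<Longrightarrow>
           verts (Gs i) \<inter> verts (Gs j) = {}"
    and "\<And>i. i \<in> {1..m} \<Longrightarrow> verts (Gs i) \<inter> verts B = {xs i}"
    and "\<And>i. i \<in> {2..m} \<Longrightarrow> pw_rooted (Gs i) (xs i) \<le> p"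
    and "x \<in> verts B"
  shows "pw_rooted G x \<le> max (pw_rooted B (xs 1) + p + 1) (pw_rooted (Gs 1) (xs 1))"
proof -
  have I: "insert 1 {2..m} = {1..m}" "1 \<notin> {2..m}" "1 \<in> {1..m}" "2 \<in> {2..m}"
    using assms(1) by auto
  have root: "xs i \<in> verts (Gs i)" "xs i \<in> verts B" if "i \<in> {1..m}" for i
    using assms(6)[OF that] by auto
  have fin: "finite (verts B)" "\<And>i. i \<in> {2..m} \<Longrightarrow> finite (verts (Gs i))"
    using assms(2,3) by (simp_all add: is_graph_def)
  obtain Y where Y: "is_path_decomp B Y" "xs 1 \<in> hd Y" "pd_width Y = pw_rooted B (xs 1)"
    using pw_rooted_attained[OF assms(2) root(2)[OF I(3)]] by blast
  obtain W where W: "is_path_decomp (Gs 1) W" "xs 1 \<in> hd W" "pd_width W = pw_rooted (Gs 1) (xs 1)"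
    using pw_rooted_attained[OF assms(3) root(1)[OF I(3)]] I(3) by blast
  have "\<forall>i\<in>{2..m}. \<exists>Zs. is_path_decomp (Gs i) Zs \<and> xs i \<in> hd Zs \<and> pd_width Zs \<le> p"
  proof
    fix i
    assume i: "i \<in> {2..m}"
    then have "i \<in> {1..m}"
      by simp
    then show "\<exists>Zs. is_path_decomp (Gs i) Zs \<and> xs i \<in> hd Zs \<and> pd_width Zs \<le> p"
      using pw_rooted_attained[OF assms(3) root(1)] assms(7)[OF i] by fastforce
  qed
  then obtain Zs where Zs: "\<And>i. i \<in> {2..m} \<Longrightarrow> is_path_decomp (Gs i) (Zs i)"
    "\<And>i. i \<in> {2..m} \<Longrightarrow> xs i \<in> hd (Zs i)" "\<And>i. i \<in> {2..m} \<Longrightarrow> pd_width (Zs i) \<le> p"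
    by metis
  have "0 \<le> p"
    using pd_width_nonneg[OF Zs(1) fin(2) Zs(2), OF I(4) I(4) I(4)] Zs(3)[OF I(4)] by linarith
  have "\<exists>F. is_path_decomp G F \<and> x \<in> hd F \<and> pd_width F \<le> max (pd_width Y + p + 1) (pd_width W)"
    using rooted_path_decomp_pendants[where r = xs and Hs = Gs,
        OF _ I(2) fin(1) assms(8) Y(1,2) W(1,2) Zs \<open>0 \<le> p\<close> fin(2)] assms(5,6)
    unfolding assms(4) I(1) by simp
  then show ?thesis
    using pw_rooted_minimal(2) Y(3) W(3) by (metis order_trans)
qed

end
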